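(* Let $I\subset S$ be a squarefree monomial ideal generated in degree $2$ which has a ($2$-)linear resolution. Then after a suitable renumbering of the variables, $I$ is weakly polymatroidal.
   Context: $S=K[x_1,\dots,x_n]$, $K$ a field, with lexicographic order $>_{lex}$ induced by $x_1>x_2>\cdots>x_n$; $G(I)$ is the minimal monomial generating set. A monomial ideal $I$ is weakly polymatroidal if for every two monomials $u=x_1^{a_1}\cdots x_n^{a_n}>_{lex}v=x_1^{b_1}\cdots x_n^{b_n}$ in $G(I)$ with $a_1=b_1,\dots,a_{t-1}=b_{t-1}$ and $a_t>b_t$, there exists $j>t$ such that $x_t(v/x_j)\in I$. *)

theory Defs
  imports Main "HOL-Combinatorics.Permutations"
begin

text \<open>Monomials of S = K[x_1,...,x_n] are exponent vectors u :: nat => nat supported in {1..n}.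
A monomial ideal is identified with the set of monomials it contains.\<close>

type_synonym monomial = "nat \<Rightarrow> nat"

definition monomials :: "nat \<Rightarrow> monomial set" where
  "monomials n = {u. \<forall>i. i \<notin> {1..n} \<longrightarrow> u i = 0}"

definition mdeg :: "nat \<Rightarrow> monomial \<Rightarrow> nat" where
  "mdeg n u = (\<Sum>i\<in>{1..n}. u i)"

definition is_monomial_ideal :: "nat \<Rightarrow> monomial set \<Rightarrow> bool" where
  "is_monomial_ideal n I \<longleftrightarrow> I \<subseteq> monomials n \<and>
     (\<forall>u\<in>I. \<forall>v\<in>monomials n. u \<le> v \<longrightarrow> v \<in> I)"

definition mingens :: "monomial set \<Rightarrow> monomial set" where
  "mingens I = {u\<in>I. \<forall>v\<in>I. v \<le> u \<longrightarrow> v = u}"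

definition squarefree_gen_deg2 :: "nat \<Rightarrow> monomial set \<Rightarrow> bool" where
  "squarefree_gen_deg2 n I \<longleftrightarrow> (\<forall>u\<in>mingens I. (\<forall>i. u i \<le> 1) \<and> mdeg n u = 2)"

text \<open>Koszul complex I \<otimes> K(x_1,...,x_n), whose homology is Tor^S_i(I,K).
A basis element u \<otimes> e_F (u a monomial of I, F \<subseteq> {1..n}) has homological degree card F
and internal degree deg u + card F. Chains are K-valued coefficient functions on pairs (u,F).\<close>

definition kbasis :: "nat \<Rightarrow> monomial set \<Rightarrow> nat \<Rightarrow> nat \<Rightarrow> (monomial \<times> nat set) set" where
  "kbasis n I i j = {(u,F). u \<in> I \<and> F \<subseteq> {1..n} \<and> card F = i \<and> mdeg n u + i = j}"

text \<open>d(u \<otimes> e_F) = \<Sum>_{k\<in>F} (-1)^{#{l\<in>F. l<k}} (x_k u) \<otimes> e_{F-{k}}, expressed on coefficients.\<close>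
definition kdiff :: "nat \<Rightarrow> (monomial \<times> nat set \<Rightarrow> 'k::field) \<Rightarrow> (monomial \<times> nat set \<Rightarrow> 'k)" where
  "kdiff n c = (\<lambda>(w,G). \<Sum>k\<in>{1..n} - G.
      if 1 \<le> w k then (-1) ^ card {l\<in>G. l < k} * c (w(k := w k - 1), insert k G) else 0)"

definition supported_on :: "('b \<Rightarrow> 'k::zero) \<Rightarrow> 'b set \<Rightarrow> bool" where
  "supported_on c B \<longleftrightarrow> (\<forall>x. x \<notin> B \<longrightarrow> c x = 0)"

text \<open>I has a d-linear resolution over K: Tor_i(I,K)_j = 0 (graded Betti numbers vanish)
for all j \<noteq> i + d, i.e. the Koszul complex is exact at (i,j).\<close>
definition has_linear_resolution :: "'k::field itself \<Rightarrow> nat \<Rightarrow> nat \<Rightarrow> monomial set \<Rightarrow> bool" where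
  "has_linear_resolution (_::'k itself) d n I \<longleftrightarrow>
     (\<forall>i j. j \<noteq> i + d \<longrightarrow>
        (\<forall>c :: monomial \<times> nat set \<Rightarrow> 'k. supported_on c (kbasis n I i j) \<and> kdiff n c = (\<lambda>_. 0) \<longrightarrow>
           (\<exists>b :: monomial \<times> nat set \<Rightarrow> 'k. supported_on b (kbasis n I (i+1) j) \<and> kdiff n b = c)))"

definition weakly_polymatroidal :: "nat \<Rightarrow> monomial set \<Rightarrow> bool" where
  "weakly_polymatroidal n I \<longleftrightarrow>
     (\<forall>u\<in>mingens I. \<forall>v\<in>mingens I. \<forall>t\<in>{1..n}.
        (\<forall>l\<in>{1..n}. l < t \<longrightarrow> u l = v l) \<and> u t > v t \<longrightarrow>
        (\<exists>j. t < j \<and> j \<le> n \<and> 1 \<le> v j \<and> (v(t := v t + 1))(j := v j - 1) \<in> I))"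

text \<open>Renumbering of variables by a permutation \<sigma> of {1..n}: new variable x_i is old x_{\<sigma> i}.\<close>
definition renumber :: "(nat \<Rightarrow> nat) \<Rightarrow> monomial set \<Rightarrow> monomial set" where
  "renumber \<sigma> I = (\<lambda>u. u \<circ> \<sigma>) ` I"

end

theory Submission
  imports Defs
begin

(* Let G be the graph on the variables whose edges are the squarefree quadrics x_p x_q NOT in I.
   If G had an induced cycle w_0, ..., w_(m-1) with m >= 4 on the vertex set W, consider
   z = x_(w_0) x_(w_1) (x) e_(W - {w_0, w_1}) in the Koszul complex of S. Its boundary dz lies in
   the Koszul complex of I, in homological degree m - 3 and internal degree m, and is a cycle there;
   since m <> (m - 3) + 2, a 2-linear resolution makes it a boundary db, where b is supported on
   elements x_p x_q (x) e_F with x_p x_q in I and F = W - {p, q}. Pair both sides with a cochain phi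
   supported on the complements of the fan triangles {w_0, w_i, w_(i+1)}, scaled so that its
   coboundary vanishes on the complements of all non-edges of the cycle but not on W - {w_0, w_1}:
   then 0 = <delta phi, b> = <phi, db> = <delta phi, z> <> 0.
   So G is chordal and has a perfect elimination order. Number the variables along it: if
   x_c x_d is in I and a < c, d, then x_a x_c or x_a x_d is in I, since otherwise c and d would be
   neighbours of the simplicial vertex a among a..n. For an ideal generated by squarefree quadrics
   this exchange property is exactly weak polymatroidality. *)

section \<open>Chordal graphs and perfect elimination orders\<close>

definition cyclically_adjacent :: "nat \<Rightarrow> nat \<Rightarrow> nat \<Rightarrow> bool" where
  "cyclically_adjacent m i j \<longleftrightarrow> j = i + 1 \<or> i = j + 1 \<or> (i = 0 \<and> j = m - 1) \<or> (j = 0 \<and> i = m - 1)"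

definition induced_cycle :: "(nat \<Rightarrow> nat \<Rightarrow> bool) \<Rightarrow> (nat \<Rightarrow> nat) \<Rightarrow> nat \<Rightarrow> bool" where
  "induced_cycle adj w m \<longleftrightarrow> 4 \<le> m \<and> inj_on w {..<m} \<and>
     (\<forall>i<m. \<forall>j<m. adj (w i) (w j) \<longleftrightarrow> cyclically_adjacent m i j)"

definition simplicial :: "(nat \<Rightarrow> nat \<Rightarrow> bool) \<Rightarrow> nat set \<Rightarrow> nat \<Rightarrow> bool" where
  "simplicial adj V x \<longleftrightarrow> x \<in> V \<and> (\<forall>y\<in>V. \<forall>z\<in>V. adj x y \<longrightarrow> adj x z \<longrightarrow> y \<noteq> z \<longrightarrow> adj y z)"

lemma simplicial_if_neighbours_within:
  assumes "simplicial adj V' c" "c \<in> V" "\<And>y. y \<in> V \<Longrightarrow> adj c y \<Longrightarrow> y \<in> V'"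
  shows "simplicial adj V c"
  using assms unfolding simplicial_def by blast

lemma rtranclp_imp_path:
  assumes "r\<^sup>*\<^sup>* x y"
  obtains k p where "p 0 = x" "p k = y" "\<forall>i<k. r (p i) (p (Suc i))"
  using assms
proof (induction arbitrary: thesis rule: rtranclp_induct)
  case base
  show ?case by (rule base[of "\<lambda>_. x" 0]) auto
next
  case (step y z)
  obtain k p where p: "p 0 = x" "p k = y" "\<forall>i<k. r (p i) (p (Suc i))"
    using step.IH by blast
  show ?case
    by (rule step.prems[of "p(Suc k := z)" "Suc k"]) (use p step.hyps(2) in \<open>auto simp: less_Suc_eq\<close>)
qed

lemma set_drop_eq_nth_image: "set (drop k xs) = (!) xs ` {k..<length xs}"
proof (intro equalityI subsetI)
  fix y assume "y \<in> set (drop k xs)"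
  then obtain i where "i < length xs - k" "y = drop k xs ! i" by (auto simp: in_set_conv_nth)
  then show "y \<in> (!) xs ` {k..<length xs}" by (intro image_eqI[of _ _ "k + i"]) auto
next
  fix y assume "y \<in> (!) xs ` {k..<length xs}"
  then obtain j where "k \<le> j" "j < length xs" "y = xs ! j" by auto
  then have "y = drop k xs ! (j - k)" "j - k < length (drop k xs)" by auto
  then show "y \<in> set (drop k xs)" by (metis nth_mem)
qed

locale chordal_graph =
  fixes adj :: "nat \<Rightarrow> nat \<Rightarrow> bool"
  assumes adj_sym: "adj x y \<Longrightarrow> adj y x"
    and adj_irrefl: "\<not> adj x x"
    and no_induced_cycle: "\<not> induced_cycle adj w m"
begin

definition linking_path :: "nat set \<Rightarrow> nat \<Rightarrow> nat \<Rightarrow> nat \<Rightarrow> (nat \<Rightarrow> nat) \<Rightarrow> bool" where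
  "linking_path C s t k p \<longleftrightarrow> (\<forall>i\<le>k. p i \<in> C) \<and> (\<forall>i<k. adj (p i) (p (Suc i))) \<and> adj s (p 0) \<and> adj t (p k)"

lemma linking_path_shortcut_ends:
  assumes p: "linking_path C s t k p"
    and "(0 < i \<and> i \<le> k \<and> adj s (p i)) \<or> (i < k \<and> adj t (p i))"
  shows "\<exists>k' q. k' < k \<and> linking_path C s t k' q"
  using assms(2)
proof
  assume "0 < i \<and> i \<le> k \<and> adj s (p i)"
  then have "linking_path C s t (k - i) (\<lambda>l. p (l + i))"
    using p unfolding linking_path_def by auto
  then show ?thesis using \<open>0 < i \<and> i \<le> k \<and> adj s (p i)\<close> by (intro exI[of _ "k - i"]) auto
next
  assume "i < k \<and> adj t (p i)"
  then have "linking_path C s t i p" using p unfolding linking_path_def by auto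
  then show ?thesis using \<open>i < k \<and> adj t (p i)\<close> by blast
qed

lemma linking_path_shortcut_inner:
  assumes p: "linking_path C s t k p" and ij: "i < j" "j \<le> k"
    and short: "p i = p j \<or> (i + 1 < j \<and> adj (p i) (p j))"
  shows "\<exists>k' q. k' < k \<and> linking_path C s t k' q"
proof -
  define d where "d = (if p i = p j then j - i else j - i - 1)"
  define q where "q l = (if l \<le> i then p l else p (l + d))" for l
  have d: "0 < d" "i + d \<le> j"
    "(i + d = j \<and> p (i + d) = p i) \<or> (Suc i + d = j \<and> adj (p i) (p (Suc i + d)))"
    using ij short unfolding d_def by auto
  have "linking_path C s t (k - d) q"
    unfolding linking_path_def
  proof (intro conjI allI impI)
    fix l assume "l < k - d"
    show "adj (q l) (q (Suc l))"
    proof (cases "l < i")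
      case True then show ?thesis using p \<open>l < k - d\<close> unfolding q_def linking_path_def by auto
    next
      case False
      then show ?thesis
      proof (cases "l = i")
        case True
        have "adj (p (i + d)) (p (Suc (i + d))) \<or> adj (p i) (p (Suc i + d))"
          using d(3) p \<open>l < k - d\<close> True unfolding linking_path_def by auto
        then show ?thesis using d(3) True unfolding q_def by auto
      next
        case False
        then show ?thesis using \<open>\<not> l < i\<close> p \<open>l < k - d\<close> unfolding q_def linking_path_def by auto
      qed
    qed
  next
    have "k - d \<le> i \<Longrightarrow> i + d = k \<and> p (i + d) = p i" using d ij by auto
    then show "adj t (q (k - d))" using p unfolding q_def linking_path_def by (cases "k - d \<le> i") auto
  qed (use p ij d in \<open>auto simp: q_def linking_path_def\<close>)
  then show ?thesis using d(1,2) ij by (intro exI[of _ "k - d"]) auto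
qed

lemma shortest_linking_path_chordless:
  assumes p: "linking_path C s t K p" and shortest: "\<nexists>k q. k < K \<and> linking_path C s t k q"
  shows "\<And>i j. i \<le> K \<Longrightarrow> j \<le> K \<Longrightarrow> p i = p j \<longleftrightarrow> i = j"
    and "\<And>i j. i \<le> K \<Longrightarrow> j \<le> K \<Longrightarrow> adj (p i) (p j) \<longleftrightarrow> j = i + 1 \<or> i = j + 1"
    and "\<And>i. i \<le> K \<Longrightarrow> adj s (p i) \<longleftrightarrow> i = 0"
    and "\<And>i. i \<le> K \<Longrightarrow> adj t (p i) \<longleftrightarrow> i = K"
proof -
  have step: "adj (p i) (p (Suc i))" if "i < K" for i
    using p that unfolding linking_path_def by blast
  show inj: "p i = p j \<longleftrightarrow> i = j" if "i \<le> K" "j \<le> K" for i j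
    using linking_path_shortcut_inner[OF p, of i j] linking_path_shortcut_inner[OF p, of j i]
      shortest that by (cases i j rule: linorder_cases) auto
  show "adj (p i) (p j) \<longleftrightarrow> j = i + 1 \<or> i = j + 1" if "i \<le> K" "j \<le> K" for i j
  proof
    assume "adj (p i) (p j)"
    moreover have "\<not> (i + 1 < j \<and> adj (p i) (p j))" "\<not> (j + 1 < i \<and> adj (p j) (p i))"
      using linking_path_shortcut_inner[OF p, of i j] linking_path_shortcut_inner[OF p, of j i]
        shortest that by auto
    ultimately show "j = i + 1 \<or> i = j + 1"
      using adj_sym[of "p i" "p j"] adj_irrefl[of "p i"] by (cases i j rule: linorder_cases) auto
  next
    assume "j = i + 1 \<or> i = j + 1"
    then show "adj (p i) (p j)" using step[of i] step[of j] adj_sym[of "p j" "p i"] that by auto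
  qed
  have ends: "adj s (p 0)" "adj t (p K)" using p unfolding linking_path_def by blast+
  show "adj s (p i) \<longleftrightarrow> i = 0" if "i \<le> K" for i
    using linking_path_shortcut_ends[OF p, of i] shortest that ends(1) by (cases "i = 0") auto
  show "adj t (p i) \<longleftrightarrow> i = K" if "i \<le> K" for i
    using linking_path_shortcut_ends[OF p, of i] shortest that ends(2) by (cases "i = K") auto
qed

(* A shortest linking path, closed up through t, a and s, would be an induced cycle of length >= 4. *)
lemma common_neighbours_not_linked:
  assumes as: "adj a s" and at: "adj a t" and st: "s \<noteq> t" "\<not> adj s t"
    and C: "\<forall>c\<in>C. \<not> adj a c \<and> c \<noteq> a \<and> c \<noteq> s \<and> c \<noteq> t"
  shows "\<not> linking_path C s t k p"
proof
  assume "linking_path C s t k p"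
  then obtain K q where q: "linking_path C s t K q"
    and shortest: "\<nexists>k' q'. k' < K \<and> linking_path C s t k' q'"
    using ex_has_least_nat[of "\<lambda>k. \<exists>q. linking_path C s t k q" k "\<lambda>k. k"] by (meson not_le)
  note chordless = shortest_linking_path_chordless[OF q shortest]
  have qC: "q l \<noteq> a \<and> q l \<noteq> s \<and> q l \<noteq> t \<and> \<not> adj a (q l) \<and> \<not> adj (q l) a" if "l \<le> K" for l
    using q C that adj_sym unfolding linking_path_def by blast
  have q_s: "adj (q l) s \<longleftrightarrow> l = 0" and q_t: "adj (q l) t \<longleftrightarrow> l = K" if "l \<le> K" for l
    using chordless(3,4)[OF that] adj_sym by blast+
  have ends: "a \<noteq> s" "a \<noteq> t" "adj s a" "adj t a" "\<not> adj t s"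
    using as at st adj_sym adj_irrefl by blast+
  define w where "w l = (if l = 0 then a else if l = 1 then s else if l < K + 3 then q (l - 2) else t)" for l
  have w_cases: "i = 0 \<or> i = 1 \<or> (\<exists>l\<le>K. i = l + 2) \<or> i = K + 3" if "i < K + 4" for i
    using that by (cases "2 \<le> i \<and> i < K + 3") (auto intro: exI[of _ "i - 2"])
  have w_simps: "w 0 = a" "w 1 = s" "w (K + 3) = t" "\<And>l. l \<le> K \<Longrightarrow> w (l + 2) = q l"
    unfolding w_def by auto
  have "induced_cycle adj w (K + 4)"
    unfolding induced_cycle_def
  proof (intro conjI allI impI)
    show "inj_on w {..<K + 4}"
    proof (rule inj_onI)
      fix i j assume "i \<in> {..<K + 4}" "j \<in> {..<K + 4}" and eq: "w i = w j"
      then have "i = 0 \<or> i = 1 \<or> (\<exists>l\<le>K. i = l + 2) \<or> i = K + 3"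
        and "j = 0 \<or> j = 1 \<or> (\<exists>l\<le>K. j = l + 2) \<or> j = K + 3" using w_cases by auto
      then show "i = j" using eq
        by (elim disjE exE conjE; simp only: w_simps) (use st(1) ends qC chordless(1) in force)+
    qed
    fix i j assume "i < K + 4" "j < K + 4"
    then have "i = 0 \<or> i = 1 \<or> (\<exists>l\<le>K. i = l + 2) \<or> i = K + 3"
      and "j = 0 \<or> j = 1 \<or> (\<exists>l\<le>K. j = l + 2) \<or> j = K + 3" using w_cases by auto
    then show "adj (w i) (w j) \<longleftrightarrow> cyclically_adjacent (K + 4) i j"
      by (elim disjE exE conjE; simp only: w_simps)
        (auto simp: cyclically_adjacent_def chordless(2,3,4) q_s q_t qC ends as at st adj_irrefl)
  qed simp
  then show False using no_induced_cycle by blast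
qed

lemma attachments_of_connected_set_adjacent:
  assumes as: "adj a s" and at: "adj a t" and st: "s \<noteq> t"
    and R: "\<forall>r\<in>R. \<not> adj a r \<and> r \<noteq> a \<and> r \<noteq> s \<and> r \<noteq> t"
    and conn: "(\<lambda>x y. adj x y \<and> x \<in> R \<and> y \<in> R)\<^sup>*\<^sup>* c1 c2"
    and c: "c1 \<in> R" "adj s c1" "adj t c2"
  shows "adj s t"
proof (rule ccontr)
  assume "\<not> adj s t"
  obtain k p where p0: "p 0 = c1" and pk: "p k = c2"
    and steps: "\<And>i. i < k \<Longrightarrow> adj (p i) (p (Suc i)) \<and> p i \<in> R \<and> p (Suc i) \<in> R"
    using rtranclp_imp_path[OF conn] by metis
  have "p i \<in> R" if "i \<le> k" for i
  proof (cases i)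
    case (Suc j)
    then show ?thesis using steps[of j] that by simp
  qed (use p0 c(1) in simp)
  then have "linking_path R s t k p"
    unfolding linking_path_def using steps p0 pk c(2,3) by simp
  then show False using common_neighbours_not_linked[OF as at st \<open>\<not> adj s t\<close> R] by simp
qed

lemma component_with_clique_attachments:
  assumes "b \<in> V" "b \<noteq> a" "\<not> adj a b"
  obtains C S where "b \<in> C" "\<And>c. c \<in> C \<Longrightarrow> c \<in> V \<and> c \<noteq> a \<and> \<not> adj a c"
    "\<And>s. s \<in> S \<Longrightarrow> s \<in> V \<and> adj a s" "\<And>s t. s \<in> S \<Longrightarrow> t \<in> S \<Longrightarrow> s \<noteq> t \<Longrightarrow> adj s t"
    "\<And>c y. c \<in> C \<Longrightarrow> y \<in> V \<Longrightarrow> adj c y \<Longrightarrow> y \<in> C \<union> S"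
proof -
  define R where "R = {v\<in>V. v \<noteq> a \<and> \<not> adj a v}"
  define Radj where "Radj = (\<lambda>x y. adj x y \<and> x \<in> R \<and> y \<in> R)"
  define C where "C = {v. Radj\<^sup>*\<^sup>* b v}"
  define S where "S = {s\<in>V. adj a s \<and> (\<exists>c\<in>C. adj s c)}"
  have CR: "C \<subseteq> R"
  proof
    fix x assume "x \<in> C"
    then have "Radj\<^sup>*\<^sup>* b x" unfolding C_def by simp
    then show "x \<in> R" by (cases rule: rtranclp.cases) (use assms in \<open>auto simp: R_def Radj_def\<close>)
  qed
  have neighbours: "y \<in> C \<union> S" if "c \<in> C" "y \<in> V" "adj c y" for c y
  proof (cases "adj a y")
    case True
    then show ?thesis using that adj_sym unfolding S_def by blast
  next
    case False
    then have "Radj c y" using that CR adj_sym[of a y] adj_sym[of c a] unfolding R_def Radj_def by auto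
    then show ?thesis using that(1) unfolding C_def by auto
  qed
  have clique: "adj s t" if st: "s \<in> S" "t \<in> S" "s \<noteq> t" for s t
  proof -
    obtain c1 c2 where c: "c1 \<in> C" "adj s c1" "c2 \<in> C" "adj t c2" using st unfolding S_def by blast
    have "symp Radj" unfolding Radj_def symp_def using adj_sym by blast
    then have "Radj\<^sup>*\<^sup>* c1 b"
      using c(1) unfolding C_def by (simp add: sympD symp_rtranclp)
    then have "Radj\<^sup>*\<^sup>* c1 c2"
      using c(3) unfolding C_def by simp
    moreover have "\<forall>r\<in>R. \<not> adj a r \<and> r \<noteq> a \<and> r \<noteq> s \<and> r \<noteq> t"
      using st unfolding R_def S_def by auto
    ultimately show "adj s t"
      using attachments_of_connected_set_adjacent[of a s t R c1 c2] st c CR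
      unfolding S_def Radj_def by blast
  qed
  show thesis
  proof (rule that[of C S])
    show "b \<in> C" unfolding C_def by simp
    show "c \<in> V \<and> c \<noteq> a \<and> \<not> adj a c" if "c \<in> C" for c using CR that unfolding R_def by blast
    show "s \<in> V \<and> adj a s" if "s \<in> S" for s using that unfolding S_def by blast
    show "adj s t" if "s \<in> S" "t \<in> S" "s \<noteq> t" for s t using clique that .
    show "y \<in> C \<union> S" if "c \<in> C" "y \<in> V" "adj c y" for c y using neighbours that .
  qed
qed

lemma simplicial_vertex_outside_closed_neighbourhood:
  assumes "finite V" "a \<in> V" "b \<in> V" "b \<noteq> a" "\<not> adj a b"
  shows "\<exists>c\<in>V. c \<noteq> a \<and> \<not> adj a c \<and> simplicial adj V c"
  using assms
proof (induction "card V" arbitrary: V a b rule: less_induct)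
  case less
  obtain C S where bC: "b \<in> C" and C: "\<And>c. c \<in> C \<Longrightarrow> c \<in> V \<and> c \<noteq> a \<and> \<not> adj a c"
    and S: "\<And>s. s \<in> S \<Longrightarrow> s \<in> V \<and> adj a s" and S_clique: "\<And>s t. s \<in> S \<Longrightarrow> t \<in> S \<Longrightarrow> s \<noteq> t \<Longrightarrow> adj s t"
    and neighbours: "\<And>c y. c \<in> C \<Longrightarrow> y \<in> V \<Longrightarrow> adj c y \<Longrightarrow> y \<in> C \<union> S"
    using component_with_clique_attachments[OF less.prems(3-5)] by blast
  define V' where "V' = C \<union> S"
  have "V' \<subseteq> V - {a}" using C S adj_irrefl unfolding V'_def by blast
  then have smaller: "card V' < card V" and fin: "finite V'"
    using less.prems(1,2) by (auto intro: psubset_card_mono finite_subset)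
  have lift: "\<exists>c\<in>V. c \<noteq> a \<and> \<not> adj a c \<and> simplicial adj V c" if "c \<in> C" "simplicial adj V' c" for c
  proof -
    have "simplicial adj V c"
      by (rule simplicial_if_neighbours_within[OF that(2)]) (use that C neighbours in \<open>auto simp: V'_def\<close>)
    then show ?thesis using C[OF that(1)] by blast
  qed
  show ?case
  proof (cases "\<forall>x\<in>V'. \<forall>y\<in>V'. x \<noteq> y \<longrightarrow> adj x y")
    case True
    then have "simplicial adj V' b" using bC unfolding simplicial_def V'_def by blast
    then show ?thesis using lift bC by blast
  next
    case False
    then obtain x y where xy: "x \<in> V'" "y \<in> V'" "y \<noteq> x" "\<not> adj x y" by blast
    \<comment> \<open>base the recursion at a vertex of S when possible, so that the vertex it returns avoids S\<close>
    obtain x' y' where x'y': "x' \<in> V'" "y' \<in> V'" "y' \<noteq> x'" "\<not> adj x' y'"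
      and "x' \<in> S \<or> (\<forall>s\<in>S. \<forall>z\<in>V'. z \<noteq> s \<longrightarrow> adj s z)"
    proof (cases "\<exists>s\<in>S. \<exists>z\<in>V'. z \<noteq> s \<and> \<not> adj s z")
      case True
      then obtain s z where "s \<in> S" "z \<in> V'" "z \<noteq> s" "\<not> adj s z" by blast
      then show ?thesis using that[of s z] unfolding V'_def by blast
    next
      case False
      then show ?thesis using that[OF xy] by blast
    qed
    obtain c where c: "c \<in> V'" "c \<noteq> x'" "\<not> adj x' c" "simplicial adj V' c"
      using less.hyps[OF smaller fin x'y'] by blast
    have "c \<notin> S"
    proof
      assume "c \<in> S"
      from \<open>x' \<in> S \<or> _\<close> show False
      proof
        assume "x' \<in> S"
        then show False using S_clique[OF \<open>x' \<in> S\<close> \<open>c \<in> S\<close>] c(2,3) by simp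
      next
        assume "\<forall>s\<in>S. \<forall>z\<in>V'. z \<noteq> s \<longrightarrow> adj s z"
        then have "adj c x'" using \<open>c \<in> S\<close> x'y'(1) c(2) by (simp add: eq_commute)
        then show False using c(3) adj_sym by blast
      qed
    qed
    then have "c \<in> C" using c(1) unfolding V'_def by blast
    then show ?thesis using lift c(4) by blast
  qed
qed

lemma simplicial_vertex_exists:
  assumes "finite V" "V \<noteq> {}"
  obtains x where "simplicial adj V x"
proof (cases "\<exists>a\<in>V. \<exists>b\<in>V. b \<noteq> a \<and> \<not> adj a b")
  case True
  then obtain a b where "a \<in> V" "b \<in> V" "b \<noteq> a" "\<not> adj a b" by blast
  then show ?thesis
    using simplicial_vertex_outside_closed_neighbourhood[OF assms(1)] that by metis
next
  case False
  obtain a where "a \<in> V" using assms(2) by blast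
  then have "simplicial adj V a" using False unfolding simplicial_def by auto
  then show ?thesis by (rule that)
qed

lemma perfect_elimination_order_exists:
  assumes "finite V"
  shows "\<exists>L. distinct L \<and> set L = V \<and> (\<forall>i<length L. simplicial adj (set (drop i L)) (L ! i))"
  using assms
proof (induction "card V" arbitrary: V rule: less_induct)
  case less
  show ?case
  proof (cases "V = {}")
    case True
    then show ?thesis by simp
  next
    case False
    then obtain x where x: "simplicial adj V x" using simplicial_vertex_exists less.prems by blast
    then have "x \<in> V" unfolding simplicial_def by simp
    have "card (V - {x}) < card V" using less.prems \<open>x \<in> V\<close> by (rule card_Diff1_less)
    then obtain L where L: "distinct L" "set L = V - {x}"
      "\<forall>i<length L. simplicial adj (set (drop i L)) (L ! i)"
      using less.hyps less.prems by blast
    have "\<forall>i<length (x # L). simplicial adj (set (drop i (x # L))) ((x # L) ! i)"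
    proof (intro allI impI)
      fix i assume "i < length (x # L)"
      then show "simplicial adj (set (drop i (x # L))) ((x # L) ! i)"
        using L(2,3) x \<open>x \<in> V\<close> by (cases i) (auto simp: insert_absorb)
    qed
    then show ?thesis using L \<open>x \<in> V\<close> by (intro exI[of _ "x # L"]) auto
  qed
qed

lemma perfect_elimination_permutation:
  obtains \<sigma> where "\<sigma> permutes {1..n}" "\<And>a. a \<in> {1..n} \<Longrightarrow> simplicial adj (\<sigma> ` {a..n}) (\<sigma> a)"
proof -
  obtain L where L: "distinct L" "set L = {1..n}"
    and peo: "\<forall>i<length L. simplicial adj (set (drop i L)) (L ! i)"
    using perfect_elimination_order_exists[of "{1..n}"] by auto
  have len: "length L = n" using distinct_card[OF L(1)] L(2) by simp
  define \<sigma> where "\<sigma> i = (if i \<in> {1..n} then L ! (i - 1) else i)" for i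
  have image: "\<sigma> ` {a..n} = (!) L ` {a - 1..<n}" if "1 \<le> a" for a
  proof (intro equalityI subsetI)
    fix y assume "y \<in> \<sigma> ` {a..n}"
    then show "y \<in> (!) L ` {a - 1..<n}" using that unfolding \<sigma>_def by force
  next
    fix y assume "y \<in> (!) L ` {a - 1..<n}"
    then obtain j where "a - 1 \<le> j" "j < n" "y = L ! j" by auto
    then show "y \<in> \<sigma> ` {a..n}" using that unfolding \<sigma>_def by (intro image_eqI[of _ _ "Suc j"]) auto
  qed
  have "\<sigma> ` {1..n} = {1..n}" using image[of 1] L(2) len set_drop_eq_nth_image[of 0 L] by simp
  moreover have "inj_on \<sigma> {1..n}"
    using L(1) len unfolding \<sigma>_def by (auto intro!: inj_onI simp: nth_eq_iff_index_eq)
  ultimately have "\<sigma> permutes {1..n}"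
    by (intro bij_imp_permutes) (auto simp: bij_betw_def \<sigma>_def)
  moreover have "simplicial adj (\<sigma> ` {a..n}) (\<sigma> a)" if "a \<in> {1..n}" for a
    using peo[rule_format, of "a - 1"] that image[of a] set_drop_eq_nth_image[of "a - 1" L] len
    unfolding \<sigma>_def by auto
  ultimately show thesis by (rule that)
qed

end

section \<open>The Koszul complex\<close>

lemma kdiff_apply:
  "kdiff n c (u, G) = (\<Sum>k\<in>{1..n} - G.
     if 1 \<le> u k then (-1) ^ card {l\<in>G. l < k} * c (u(k := u k - 1), insert k G) else 0)"
  by (simp add: kdiff_def)

(* Matching (k, l) with (l, k) across the diagonal, instead of comparing the sum with its negative,
   keeps this valid in characteristic 2. *)
lemma sum_antisymmetric_pairs:
  fixes T :: "'a::linorder \<times> 'a \<Rightarrow> 'b::ab_group_add"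
  assumes "finite P" "\<And>k l. (k, l) \<in> P \<Longrightarrow> (l, k) \<in> P \<and> k \<noteq> l \<and> T (l, k) = - T (k, l)"
  shows "sum T P = 0"
proof -
  have Psym: "\<And>k l. (k, l) \<in> P \<Longrightarrow> (l, k) \<in> P" and Pne: "\<And>k l. (k, l) \<in> P \<Longrightarrow> k \<noteq> l"
    and Tn: "\<And>k l. (k, l) \<in> P \<Longrightarrow> T (l, k) = - T (k, l)" using assms(2) by blast+
  define P1 where "P1 = {(k, l)\<in>P. k < l}"
  define P2 where "P2 = {(k, l)\<in>P. l < k}"
  have PU: "P = P1 \<union> P2" unfolding P1_def P2_def using Pne by (auto simp: neq_iff)
  have disj: "P1 \<inter> P2 = {}" unfolding P1_def P2_def by auto
  have fin: "finite P1" "finite P2"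
    by (rule finite_subset[OF _ assms(1)], auto simp: P1_def P2_def)+
  have "sum T P2 = sum (T \<circ> prod.swap) P1"
    by (rule sum.reindex_bij_witness[where i = prod.swap and j = prod.swap]) (use Psym in \<open>auto simp: P1_def P2_def\<close>)
  also have "\<dots> = sum (\<lambda>x. - T x) P1"
  proof (rule sum.cong)
    fix x assume "x \<in> P1"
    then show "(T \<circ> prod.swap) x = - T x" unfolding P1_def using Tn by (cases x) auto
  qed simp
  also have "\<dots> = - sum T P1" by (simp add: sum_negf)
  finally show ?thesis using PU disj fin by (simp add: sum.union_disjoint)
qed

lemma koszul_sign_insert:
  fixes k l :: nat and G :: "nat set"
  assumes "k \<notin> G" "k < l"
  shows "((-1::'k::comm_ring_1) ^ card {x\<in>insert k G. x < l}) = - ((-1) ^ card {x\<in>G. x < l})"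
    and "((-1::'k::comm_ring_1) ^ card {x\<in>insert l G. x < k}) = ((-1) ^ card {x\<in>G. x < k})"
proof -
  have "{x\<in>insert k G. x < l} = insert k {x\<in>G. x < l}" using assms by auto
  moreover have "finite {x\<in>G. x < l}" by (rule finite_subset[of _ "{..<l}"]) auto
  ultimately have "card {x\<in>insert k G. x < l} = Suc (card {x\<in>G. x < l})" using assms by simp
  then show "((-1::'k::comm_ring_1) ^ card {x\<in>insert k G. x < l}) = - ((-1) ^ card {x\<in>G. x < l})" by simp
  have "{x\<in>insert l G. x < k} = {x\<in>G. x < k}" using assms by auto
  then show "((-1::'k::comm_ring_1) ^ card {x\<in>insert l G. x < k}) = ((-1) ^ card {x\<in>G. x < k})" by simp
qed

lemma koszul_sign_swap:
  fixes k l :: nat and G :: "nat set"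
  assumes "k \<notin> G" "l \<notin> G" "k \<noteq> l"
  shows "((-1::'k::comm_ring_1) ^ card {x\<in>G. x < k}) * (-1) ^ card {x\<in>insert k G. x < l}
       = - (((-1) ^ card {x\<in>G. x < l}) * (-1) ^ card {x\<in>insert l G. x < k})"
proof (cases "k < l")
  case True
  show ?thesis using koszul_sign_insert[OF assms(1) True, where 'k='k] by simp
next
  case False
  then have "l < k" using assms(3) by simp
  show ?thesis using koszul_sign_insert[OF assms(2) \<open>l < k\<close>, where 'k='k] by simp
qed

lemma kdiff_kdiff_expand:
  fixes c :: "monomial \<times> nat set \<Rightarrow> 'k::field" and u :: monomial and G :: "nat set" and n :: nat
  defines "P \<equiv> {(k, l). k \<in> {1..n} - G \<and> l \<in> {1..n} - G \<and> k \<noteq> l \<and> 1 \<le> u k \<and> 1 \<le> u l}"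
  shows "kdiff n (kdiff n c) (u, G) = (\<Sum>(k, l)\<in>P. (-1) ^ card {x\<in>G. x < k} * (-1) ^ card {x\<in>insert k G. x < l} *
    c ((u(k := u k - 1))(l := u l - 1), insert l (insert k G)))"
proof -
  define A where "A = {1..n} - G"
  define T where "T = (\<lambda>(k, l). (-1) ^ card {x\<in>G. x < k} * (-1) ^ card {x\<in>insert k G. x < l} *
    c ((u(k := u k - 1))(l := u l - 1), insert l (insert k G)))"
  have finA: "finite A" unfolding A_def by simp
  have inner: "(-1) ^ card {x\<in>G. x < k} * kdiff n c (u(k := u k - 1), insert k G) =
      (\<Sum>l\<in>A. if (k, l) \<in> P then T (k, l) else 0)" if k: "k \<in> A" "1 \<le> u k" for k
    unfolding kdiff_apply sum_distrib_left
  proof (rule sum.mono_neutral_cong_left)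
    fix l assume l: "l \<in> {1..n} - insert k G"
    then show "(-1) ^ card {x\<in>G. x < k} * (if 1 \<le> (u(k := u k - 1)) l then (-1) ^ card {x\<in>insert k G. x < l} *
        c ((u(k := u k - 1))(l := (u(k := u k - 1)) l - 1), insert l (insert k G)) else 0) =
      (if (k, l) \<in> P then T (k, l) else 0)"
      using k unfolding P_def A_def T_def by auto
  qed (use finA in \<open>auto simp: A_def P_def\<close>)
  have "kdiff n (kdiff n c) (u, G) = (\<Sum>k\<in>A. \<Sum>l\<in>A. if (k, l) \<in> P then T (k, l) else 0)"
    unfolding kdiff_apply[of n "kdiff n c"] A_def[symmetric]
  proof (rule sum.cong[OF refl])
    fix k assume "k \<in> A"
    show "(if 1 \<le> u k then (-1) ^ card {l\<in>G. l < k} * kdiff n c (u(k := u k - 1), insert k G) else 0) =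
        (\<Sum>l\<in>A. if (k, l) \<in> P then T (k, l) else 0)"
    proof (cases "1 \<le> u k")
      case True
      then show ?thesis using inner[OF \<open>k \<in> A\<close>] by simp
    qed (simp add: P_def)
  qed
  also have "\<dots> = (\<Sum>p\<in>A \<times> A. if p \<in> P then T p else 0)"
    by (simp add: sum.cartesian_product)
  also have "\<dots> = sum T P"
  proof -
    have "P \<subseteq> A \<times> A" unfolding P_def A_def by auto
    then show ?thesis using finA by (simp add: sum.If_cases Int_absorb1)
  qed
  finally show ?thesis unfolding T_def .
qed

lemma kdiff_kdiff: "kdiff n (kdiff n (c :: monomial \<times> nat set \<Rightarrow> 'k::field)) = (\<lambda>_. 0)"
proof (rule ext, clarify)
  fix u :: monomial and G :: "nat set"
  define P where "P = {(k, l). k \<in> {1..n} - G \<and> l \<in> {1..n} - G \<and> k \<noteq> l \<and> 1 \<le> u k \<and> 1 \<le> u l}"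
  define T :: "nat \<times> nat \<Rightarrow> 'k" where "T = (\<lambda>(k, l). (-1) ^ card {x\<in>G. x < k} * (-1) ^ card {x\<in>insert k G. x < l} *
    c ((u(k := u k - 1))(l := u l - 1), insert l (insert k G)))"
  have "kdiff n (kdiff n c) (u, G) = sum T P" unfolding P_def T_def by (rule kdiff_kdiff_expand)
  also have "\<dots> = 0"
  proof (rule sum_antisymmetric_pairs)
    show "finite P" by (rule finite_subset[of _ "{1..n} \<times> {1..n}"]) (auto simp: P_def)
    fix k l assume kl: "(k, l) \<in> P"
    then have k: "k \<notin> G" "l \<notin> G" "k \<noteq> l" unfolding P_def by auto
    have "(u(k := u k - 1))(l := u l - 1) = (u(l := u l - 1))(k := u k - 1)"
      using k(3) by (rule fun_upd_twist)
    moreover have "insert l (insert k G) = insert k (insert l G)" by auto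
    ultimately show "(l, k) \<in> P \<and> k \<noteq> l \<and> T (l, k) = - T (k, l)"
      using kl koszul_sign_swap[OF k, where 'k='k] unfolding P_def T_def by auto
  qed
  finally show "kdiff n (kdiff n c) (u, G) = 0" .
qed

lemma kdiff_single_nonzero:
  fixes u :: monomial
  assumes "kdiff n (\<lambda>y. if y = (u, F) then 1 else 0 :: 'k::field) (v, G) \<noteq> 0"
  shows "\<exists>k. k \<notin> G \<and> F = insert k G \<and> v = u(k := Suc (u k))"
proof -
  obtain k where k: "k \<in> {1..n} - G" and "(if 1 \<le> v k then (-1) ^ card {l\<in>G. l < k} *
      (if (v(k := v k - 1), insert k G) = (u, F) then 1 else 0) else 0) \<noteq> (0::'k)"
    using sum.not_neutral_contains_not_neutral[OF assms[unfolded kdiff_apply]] by blast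
  then have "1 \<le> v k" "u = v(k := v k - 1)" "F = insert k G"
    by (simp_all split: if_splits)
  then have "v = u(k := Suc (u k))" by simp
  then show ?thesis using k \<open>F = insert k G\<close> by blast
qed

definition sqfree_mon :: "nat set \<Rightarrow> monomial" where
  "sqfree_mon S = (\<lambda>i. if i \<in> S then 1 else 0)"

lemma mdeg_sqfree_mon: "S \<subseteq> {1..n} \<Longrightarrow> mdeg n (sqfree_mon S) = card S"
  unfolding mdeg_def sqfree_mon_def by (simp add: sum.If_cases Int_absorb1)

lemma sqfree_mon_in_monomials: "S \<subseteq> {1..n} \<Longrightarrow> sqfree_mon S \<in> monomials n"
  unfolding monomials_def sqfree_mon_def by auto

lemma sqfree_mon_mono: "S \<subseteq> T \<Longrightarrow> sqfree_mon S \<le> sqfree_mon T"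
  unfolding sqfree_mon_def le_fun_def by auto

lemma sqfree_mon_in_ideal_mono:
  assumes "is_monomial_ideal n I" "S \<subseteq> {1..n}" "T \<subseteq> S" "sqfree_mon T \<in> I"
  shows "sqfree_mon S \<in> I"
  using assms sqfree_mon_in_monomials[OF assms(2)] sqfree_mon_mono[OF assms(3)]
  unfolding is_monomial_ideal_def by blast

lemma kdiff_sqfree_mon:
  assumes "W \<subseteq> {1..n}" "G \<subseteq> W"
  shows "kdiff n b (sqfree_mon (W - G), G) =
    (\<Sum>k\<in>W - G. (-1) ^ card {l\<in>G. l < k} * b (sqfree_mon (W - insert k G), insert k G))"
  unfolding kdiff_apply
proof (rule sum.mono_neutral_cong_right)
  fix k assume k: "k \<in> W - G"
  have "(sqfree_mon (W - G))(k := sqfree_mon (W - G) k - 1) = sqfree_mon (W - insert k G)"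
    using k by (auto simp: sqfree_mon_def fun_eq_iff)
  then show "(if 1 \<le> sqfree_mon (W - G) k then (-1) ^ card {l\<in>G. l < k} *
        b ((sqfree_mon (W - G))(k := sqfree_mon (W - G) k - 1), insert k G) else 0) =
      (-1) ^ card {l\<in>G. l < k} * b (sqfree_mon (W - insert k G), insert k G)"
    using k by (simp add: sqfree_mon_def)
qed (use assms in \<open>auto simp: sqfree_mon_def\<close>)

(* The part of the Koszul complex of multidegree W has the basis x_(W - F) (x) e_F, F <= W;
   on it, kcodiff is the transpose of kdiff (kdiff_pairing). *)
definition kcodiff :: "(nat set \<Rightarrow> 'k::field) \<Rightarrow> nat set \<Rightarrow> 'k" where
  "kcodiff \<phi> F = (\<Sum>k\<in>F. (-1) ^ card {l\<in>F - {k}. l < k} * \<phi> (F - {k}))"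

lemma kdiff_pairing:
  fixes \<phi> :: "nat set \<Rightarrow> 'k::field"
  assumes W: "W \<subseteq> {1..n}"
  shows "(\<Sum>G\<in>Pow W. \<phi> G * kdiff n b (sqfree_mon (W - G), G)) =
    (\<Sum>F\<in>Pow W. b (sqfree_mon (W - F), F) * kcodiff \<phi> F)"
proof -
  have fin: "finite W" using W finite_subset by blast
  have "(\<Sum>G\<in>Pow W. \<phi> G * kdiff n b (sqfree_mon (W - G), G)) =
      (\<Sum>(G, k)\<in>Sigma (Pow W) (\<lambda>G. W - G).
        \<phi> G * ((-1) ^ card {l\<in>G. l < k} * b (sqfree_mon (W - insert k G), insert k G)))"
    by (subst sum.Sigma[symmetric])
      (auto simp: kdiff_sqfree_mon[OF W] sum_distrib_left fin intro!: sum.cong intro: finite_subset)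
  also have "\<dots> = (\<Sum>(F, k)\<in>Sigma (Pow W) (\<lambda>F. F).
      b (sqfree_mon (W - F), F) * ((-1) ^ card {l\<in>F - {k}. l < k} * \<phi> (F - {k})))"
    apply (rule sum.reindex_bij_witness[where i = "\<lambda>(F, k). (F - {k}, k)" and j = "\<lambda>(G, k). (insert k G, k)"])
        apply (auto simp: insert_absorb)[4]
    subgoal premises prems for a
    proof -
      obtain G k where a: "a = (G, k)" "k \<notin> G" using prems by auto
      have "{l \<in> insert k G - {k}. l < k} = {l \<in> G. l < k}" "insert k G - {k} = G" using a(2) by auto
      then show ?thesis unfolding a(1) prod.case by (simp add: mult_ac)
    qed
    done
  also have "\<dots> = (\<Sum>F\<in>Pow W. b (sqfree_mon (W - F), F) * kcodiff \<phi> F)"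
    unfolding kcodiff_def
    by (subst sum.Sigma[symmetric]) (auto simp: sum_distrib_left fin intro: finite_subset)
  finally show ?thesis .
qed

section \<open>Induced cycles in the complement graph obstruct a linear resolution\<close>

lemma two_term_recurrence_solvable:
  fixes a b :: "nat \<Rightarrow> 'k::field"
  assumes "\<And>j. b j \<noteq> 0"
  obtains x where "x 1 = 1" "\<And>j. 1 \<le> j \<Longrightarrow> a j * x j + b j * x (Suc j) = 0"
proof -
  define x where "x i = (\<Prod>j\<in>{1..<i}. - a j / b j)" for i
  show thesis
  proof (rule that[of x])
    show "x 1 = 1" unfolding x_def by simp
    fix j :: nat assume "1 \<le> j"
    then have "x (Suc j) = x j * (- a j / b j)" unfolding x_def by simp
    then show "a j * x j + b j * x (Suc j) = 0" using assms[of j] by simp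
  qed
qed

lemma fan_triangle_through_0_1:
  "1 \<le> (i::nat) \<Longrightarrow> \<kappa> \<noteq> 0 \<Longrightarrow> \<kappa> \<noteq> 1 \<Longrightarrow> insert \<kappa> {0, 1} = {0, i, Suc i} \<longleftrightarrow> i = 1 \<and> \<kappa> = 2"
proof
  assume "1 \<le> i" "\<kappa> \<noteq> 0" "\<kappa> \<noteq> 1" and eq: "insert \<kappa> {0, 1} = {0, i, Suc i}"
  have "i \<in> insert \<kappa> {0, 1}" "Suc i \<in> insert \<kappa> {0, 1}" unfolding eq by simp_all
  then show "i = 1 \<and> \<kappa> = 2" using \<open>1 \<le> i\<close> \<open>\<kappa> \<noteq> 1\<close> by auto
qed auto

lemma fan_triangles_through_diagonal:
  assumes "1 \<le> (j::nat)" "1 \<le> i" "\<kappa> \<noteq> 0" "\<kappa> \<noteq> Suc j"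
  shows "insert \<kappa> {0, Suc j} = {0, i, Suc i} \<longleftrightarrow> (i = j \<and> \<kappa> = j) \<or> (i = Suc j \<and> \<kappa> = Suc (Suc j))"
proof
  assume eq: "insert \<kappa> {0, Suc j} = {0, i, Suc i}"
  have "i \<in> insert \<kappa> {0, Suc j}" "Suc i \<in> insert \<kappa> {0, Suc j}" unfolding eq by simp_all
  moreover have "\<kappa> \<in> {0, i, Suc i}" "Suc j \<in> {0, i, Suc i}" unfolding eq[symmetric] by simp_all
  ultimately show "(i = j \<and> \<kappa> = j) \<or> (i = Suc j \<and> \<kappa> = Suc (Suc j))" using assms by auto
qed auto

lemma fan_triangle_edge_consecutive:
  assumes "(\<alpha>::nat) \<noteq> 0" "\<beta> \<noteq> 0" "\<alpha> \<noteq> \<beta>" "insert \<kappa> {\<alpha>, \<beta>} = {0, i, Suc i}"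
  shows "\<beta> = \<alpha> + 1 \<or> \<alpha> = \<beta> + 1"
proof -
  have "\<alpha> \<in> {0, i, Suc i}" "\<beta> \<in> {0, i, Suc i}" unfolding assms(4)[symmetric] by simp_all
  then show ?thesis using assms(1-3) by auto
qed

(* Supported on the complements of the triangles {w 0, w i, w (i + 1)}, 1 <= i <= m - 2, of the fan
   triangulation of the cycle from w 0. *)
definition fan_cochain :: "(nat \<Rightarrow> nat) \<Rightarrow> nat \<Rightarrow> (nat \<Rightarrow> 'k::field) \<Rightarrow> nat set \<Rightarrow> 'k" where
  "fan_cochain w m x G = (\<Sum>i\<in>{1..m-2}. if G = w ` {..<m} - w ` {0, i, Suc i} then x i else 0)"

lemma kcodiff_fan_cochain:
  fixes x :: "nat \<Rightarrow> 'k::field"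
  assumes inj: "inj_on w {..<m}" and W: "W = w ` {..<m}" and Q: "Q \<subseteq> {..<m}"
  shows "kcodiff (fan_cochain w m x) (W - w ` Q) =
    (\<Sum>\<kappa>\<in>{..<m} - Q. (-1) ^ card {l\<in>W - w ` insert \<kappa> Q. l < w \<kappa>} *
      (\<Sum>i\<in>{1..m-2}. if insert \<kappa> Q = {0, i, Suc i} then x i else 0))"
proof -
  have fan_at: "fan_cochain w m x (W - w ` X) = (\<Sum>i\<in>{1..m-2}. if X = {0, i, Suc i} then x i else 0)"
    if X: "X \<subseteq> {..<m}" for X
    unfolding fan_cochain_def W[symmetric]
  proof (rule sum.cong[OF refl])
    fix i assume "i \<in> {1..m-2}"
    then have T: "{0, i, Suc i} \<subseteq> {..<m}" by auto
    have "W - w ` X = W - w ` {0, i, Suc i} \<longleftrightarrow> w ` X = w ` {0, i, Suc i}"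
      using X T unfolding W by blast
    also have "\<dots> \<longleftrightarrow> X = {0, i, Suc i}" using inj X T by (rule inj_on_image_eq_iff)
    finally show "(if W - w ` X = W - w ` {0, i, Suc i} then x i else 0) =
        (if X = {0, i, Suc i} then x i else 0)" by simp
  qed
  have "W - w ` Q = w ` ({..<m} - Q)" unfolding W using Q inj by (simp add: inj_on_image_set_diff)
  moreover have "inj_on w ({..<m} - Q)" using inj by (rule inj_on_subset) auto
  ultimately have "kcodiff (fan_cochain w m x) (W - w ` Q) =
      (\<Sum>\<kappa>\<in>{..<m} - Q. (-1) ^ card {l\<in>W - w ` Q - {w \<kappa>}. l < w \<kappa>} *
        fan_cochain w m x (W - w ` Q - {w \<kappa>}))"
    unfolding kcodiff_def by (simp add: sum.reindex)
  also have "\<dots> = (\<Sum>\<kappa>\<in>{..<m} - Q. (-1) ^ card {l\<in>W - w ` insert \<kappa> Q. l < w \<kappa>} *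
      (\<Sum>i\<in>{1..m-2}. if insert \<kappa> Q = {0, i, Suc i} then x i else 0))"
  proof (rule sum.cong[OF refl])
    fix \<kappa> assume "\<kappa> \<in> {..<m} - Q"
    then have "insert \<kappa> Q \<subseteq> {..<m}" using Q by auto
    moreover have "W - w ` Q - {w \<kappa>} = W - w ` insert \<kappa> Q" by auto
    ultimately show "(-1) ^ card {l\<in>W - w ` Q - {w \<kappa>}. l < w \<kappa>} * fan_cochain w m x (W - w ` Q - {w \<kappa>}) =
        (-1) ^ card {l\<in>W - w ` insert \<kappa> Q. l < w \<kappa>} *
        (\<Sum>i\<in>{1..m-2}. if insert \<kappa> Q = {0, i, Suc i} then x i else 0)"
      by (simp only: fan_at)
  qed
  finally show ?thesis .
qed

lemma kcodiff_fan_cochain_first_edge: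
  fixes x :: "nat \<Rightarrow> 'k::field"
  assumes inj: "inj_on w {..<m}" and W: "W = w ` {..<m}" and m: "4 \<le> m"
  shows "kcodiff (fan_cochain w m x) (W - w ` {0, 1}) = (-1) ^ card {l\<in>W - w ` {2, 0, 1}. l < w 2} * x 1"
proof -
  have inner: "(\<Sum>i\<in>{1..m-2}. if insert \<kappa> {0, 1} = {0, i, Suc i} then x i else 0) = (if \<kappa> = 2 then x 1 else 0)"
    if "\<kappa> \<in> {..<m} - {0, 1}" for \<kappa>
  proof -
    have "(\<Sum>i\<in>{1..m-2}. if insert \<kappa> {0, 1} = {0, i, Suc i} then x i else 0) =
        (\<Sum>i\<in>{1..m-2}. if i = 1 \<and> \<kappa> = 2 then x i else 0)"
      by (rule sum.cong[OF refl]) (use that fan_triangle_through_0_1 in auto)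
    also have "\<dots> = (if \<kappa> = 2 then x 1 else 0)"
    proof -
      have "1 \<in> {1..m-2}" using m by simp
      then show ?thesis by (cases "\<kappa> = 2") (simp_all add: sum.delta')
    qed
    finally show ?thesis .
  qed
  have "kcodiff (fan_cochain w m x) (W - w ` {0, 1}) =
      (\<Sum>\<kappa>\<in>{..<m} - {0, 1}. (-1) ^ card {l\<in>W - w ` insert \<kappa> {0, 1}. l < w \<kappa>} *
        (\<Sum>i\<in>{1..m-2}. if insert \<kappa> {0, 1} = {0, i, Suc i} then x i else 0))"
    using m by (intro kcodiff_fan_cochain[OF inj W]) auto
  also have "\<dots> = (\<Sum>\<kappa>\<in>{..<m} - {0, 1}.
      if \<kappa> = 2 then (-1) ^ card {l\<in>W - w ` insert \<kappa> {0, 1}. l < w \<kappa>} * x 1 else 0)"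
  proof (rule sum.cong[OF refl])
    fix \<kappa> assume "\<kappa> \<in> {..<m} - {0, 1}"
    then show "(-1) ^ card {l\<in>W - w ` insert \<kappa> {0, 1}. l < w \<kappa>} *
        (\<Sum>i\<in>{1..m-2}. if insert \<kappa> {0, 1} = {0, i, Suc i} then x i else 0) =
      (if \<kappa> = 2 then (-1) ^ card {l\<in>W - w ` insert \<kappa> {0, 1}. l < w \<kappa>} * x 1 else 0)"
      unfolding inner[OF \<open>\<kappa> \<in> {..<m} - {0, 1}\<close>] by simp
  qed
  also have "\<dots> = (-1) ^ card {l\<in>W - w ` {2, 0, 1}. l < w 2} * x 1"
    using m by (simp add: sum.delta)
  finally show ?thesis .
qed

lemma kcodiff_fan_cochain_diagonal:
  fixes x :: "nat \<Rightarrow> 'k::field"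
  assumes inj: "inj_on w {..<m}" and W: "W = w ` {..<m}" and j: "1 \<le> j" "Suc (Suc j) < m"
  shows "kcodiff (fan_cochain w m x) (W - w ` {0, Suc j}) =
    (-1) ^ card {l\<in>W - w ` {j, 0, Suc j}. l < w j} * x j +
    (-1) ^ card {l\<in>W - w ` {Suc (Suc j), 0, Suc j}. l < w (Suc (Suc j))} * x (Suc j)"
proof -
  define E :: "nat \<Rightarrow> 'k" where "E \<kappa> = (-1) ^ card {l\<in>W - w ` insert \<kappa> {0, Suc j}. l < w \<kappa>}" for \<kappa>
  have inner: "(\<Sum>i\<in>{1..m-2}. if insert \<kappa> {0, Suc j} = {0, i, Suc i} then x i else 0) =
      (if \<kappa> = j then x j else 0) + (if \<kappa> = Suc (Suc j) then x (Suc j) else 0)"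
    if \<kappa>: "\<kappa> \<in> {..<m} - {0, Suc j}" for \<kappa>
  proof -
    have "(\<Sum>i\<in>{1..m-2}. if insert \<kappa> {0, Suc j} = {0, i, Suc i} then x i else 0) =
        (\<Sum>i\<in>{1..m-2}. (if i = j \<and> \<kappa> = j then x i else 0) +
          (if i = Suc j \<and> \<kappa> = Suc (Suc j) then x i else 0))"
      by (rule sum.cong[OF refl]) (use \<kappa> j fan_triangles_through_diagonal[of j _ \<kappa>] in auto)
    also have "\<dots> = (if \<kappa> = j then x j else 0) + (if \<kappa> = Suc (Suc j) then x (Suc j) else 0)"
    proof -
      have "j \<in> {1..m-2}" "Suc j \<in> {1..m-2}" using j by auto
      then show ?thesis by (cases "\<kappa> = j"; cases "\<kappa> = Suc (Suc j)") (simp_all add: sum.distrib sum.delta')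
    qed
    finally show ?thesis .
  qed
  have "kcodiff (fan_cochain w m x) (W - w ` {0, Suc j}) =
      (\<Sum>\<kappa>\<in>{..<m} - {0, Suc j}. E \<kappa> *
        (\<Sum>i\<in>{1..m-2}. if insert \<kappa> {0, Suc j} = {0, i, Suc i} then x i else 0))"
    unfolding E_def using j by (intro kcodiff_fan_cochain[OF inj W]) auto
  also have "\<dots> = (\<Sum>\<kappa>\<in>{..<m} - {0, Suc j}.
      (if \<kappa> = j then E \<kappa> * x j else 0) + (if \<kappa> = Suc (Suc j) then E \<kappa> * x (Suc j) else 0))"
  proof (rule sum.cong[OF refl])
    fix \<kappa> assume \<kappa>: "\<kappa> \<in> {..<m} - {0, Suc j}"
    show "E \<kappa> * (\<Sum>i\<in>{1..m-2}. if insert \<kappa> {0, Suc j} = {0, i, Suc i} then x i else 0) =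
        (if \<kappa> = j then E \<kappa> * x j else 0) + (if \<kappa> = Suc (Suc j) then E \<kappa> * x (Suc j) else 0)"
      unfolding inner[OF \<kappa>] by (simp add: distrib_left)
  qed
  also have "\<dots> = E j * x j + E (Suc (Suc j)) * x (Suc j)"
    using j by (simp add: sum.distrib sum.delta)
  finally show ?thesis unfolding E_def by (simp add: insert_commute)
qed

lemma kcodiff_fan_cochain_off_fan:
  fixes x :: "nat \<Rightarrow> 'k::field"
  assumes inj: "inj_on w {..<m}" and W: "W = w ` {..<m}"
    and \<alpha>\<beta>: "\<alpha> < m" "\<beta> < m" "\<alpha> \<noteq> 0" "\<beta> \<noteq> 0" "\<alpha> \<noteq> \<beta>" "\<beta> \<noteq> \<alpha> + 1" "\<alpha> \<noteq> \<beta> + 1"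
  shows "kcodiff (fan_cochain w m x) (W - w ` {\<alpha>, \<beta>}) = 0"
proof -
  have "insert \<kappa> {\<alpha>, \<beta>} \<noteq> {0, i, Suc i}" for \<kappa> i
    using fan_triangle_edge_consecutive[of \<alpha> \<beta> \<kappa> i] \<alpha>\<beta> by blast
  then show ?thesis using \<alpha>\<beta> by (subst kcodiff_fan_cochain[OF inj W]) auto
qed

lemma cochain_detecting_cycle_edge:
  assumes inj: "inj_on w {..<m}" and W: "W = w ` {..<m}" and m: "4 \<le> m"
  obtains \<phi> :: "nat set \<Rightarrow> 'k::field"
  where "kcodiff \<phi> (W - w ` {0, 1}) \<noteq> 0"
    and "\<And>\<alpha> \<beta>. \<alpha> < m \<Longrightarrow> \<beta> < m \<Longrightarrow> \<alpha> \<noteq> \<beta> \<Longrightarrow> \<not> cyclically_adjacent m \<alpha> \<beta> \<Longrightarrow>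
      kcodiff \<phi> (W - w ` {\<alpha>, \<beta>}) = 0"
proof -
  define a :: "nat \<Rightarrow> 'k" where "a j = (-1) ^ card {l\<in>W - w ` {j, 0, Suc j}. l < w j}" for j
  define b :: "nat \<Rightarrow> 'k" where
    "b j = (-1) ^ card {l\<in>W - w ` {Suc (Suc j), 0, Suc j}. l < w (Suc (Suc j))}" for j
  \<comment> \<open>the contributions of the two fan triangles containing the diagonal {w 0, w (j + 1)} must cancel\<close>
  obtain x where x1: "x 1 = 1" and rec: "\<And>j. 1 \<le> j \<Longrightarrow> a j * x j + b j * x (Suc j) = 0"
    using two_term_recurrence_solvable[of b a] unfolding b_def by auto
  have through_0: "kcodiff (fan_cochain w m x) (W - w ` {0, \<gamma>}) = 0"
    if \<gamma>: "\<gamma> < m" "\<gamma> \<noteq> 0" "\<not> cyclically_adjacent m 0 \<gamma>" for \<gamma>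
  proof -
    have "\<gamma> \<noteq> 1" "\<gamma> \<noteq> m - 1" using \<gamma>(3) unfolding cyclically_adjacent_def by auto
    then have j: "1 \<le> \<gamma> - 1" "Suc (Suc (\<gamma> - 1)) < m" and \<gamma>_eq: "Suc (\<gamma> - 1) = \<gamma>"
      using \<gamma>(1,2) by auto
    have "kcodiff (fan_cochain w m x) (W - w ` {0, Suc (\<gamma> - 1)}) = 0"
      using kcodiff_fan_cochain_diagonal[OF inj W j, where x = x] rec[OF j(1)] unfolding a_def b_def by simp
    then show ?thesis unfolding \<gamma>_eq .
  qed
  show thesis
  proof (rule that[of "fan_cochain w m x"])
    show "kcodiff (fan_cochain w m x) (W - w ` {0, 1}) \<noteq> 0"
      unfolding kcodiff_fan_cochain_first_edge[OF inj W m] x1 by simp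
    fix \<alpha> \<beta> assume \<alpha>\<beta>: "\<alpha> < m" "\<beta> < m" "\<alpha> \<noteq> \<beta>" "\<not> cyclically_adjacent m \<alpha> \<beta>"
    consider "\<alpha> = 0" | "\<beta> = 0" | "\<alpha> \<noteq> 0" "\<beta> \<noteq> 0" by blast
    then show "kcodiff (fan_cochain w m x) (W - w ` {\<alpha>, \<beta>}) = 0"
    proof cases
      case 1
      then show ?thesis using through_0[of \<beta>] \<alpha>\<beta> by simp
    next
      case 2
      then have "{\<alpha>, \<beta>} = {0, \<alpha>}" by auto
      then show ?thesis using through_0[of \<alpha>] \<alpha>\<beta> 2 by (simp add: cyclically_adjacent_def)
    next
      case 3
      then show ?thesis
        by (intro kcodiff_fan_cochain_off_fan[OF inj W]) (use \<alpha>\<beta> in \<open>auto simp: cyclically_adjacent_def\<close>)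
    qed
  qed
qed

lemma kdiff_cycle_chain_supported:
  assumes ideal: "is_monomial_ideal n I" and m: "4 \<le> m" and inj: "inj_on w {..<m}"
    and W: "W = w ` {..<m}" "W \<subseteq> {1..n}"
    and nonadjacent_in_I: "\<And>i j. i < m \<Longrightarrow> j < m \<Longrightarrow> i \<noteq> j \<Longrightarrow> \<not> cyclically_adjacent m i j \<Longrightarrow>
      sqfree_mon {w i, w j} \<in> I"
  shows "supported_on (kdiff n (\<lambda>y. if y = (sqfree_mon {w 0, w 1}, W - {w 0, w 1}) then 1 else 0 :: 'k::field))
    (kbasis n I (m - 3) m)"
  unfolding supported_on_def
proof (intro allI impI)
  fix y assume y_notin: "y \<notin> kbasis n I (m - 3) m"
  obtain v G where y: "y = (v, G)" by (cases y)
  show "kdiff n (\<lambda>y. if y = (sqfree_mon {w 0, w 1}, W - {w 0, w 1}) then 1 else 0 :: 'k) y = 0"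
  proof (rule ccontr)
    assume "kdiff n (\<lambda>y. if y = (sqfree_mon {w 0, w 1}, W - {w 0, w 1}) then 1 else 0 :: 'k) y \<noteq> 0"
    then obtain k where k: "k \<notin> G" "W - {w 0, w 1} = insert k G"
      and v: "v = (sqfree_mon {w 0, w 1})(k := Suc (sqfree_mon {w 0, w 1} k))"
      using kdiff_single_nonzero unfolding y by blast
    then obtain \<kappa> where \<kappa>: "\<kappa> < m" "k = w \<kappa>" "\<kappa> \<noteq> 0" "\<kappa> \<noteq> 1" unfolding W(1) by auto
    have w_inj: "w i = w j \<longleftrightarrow> i = j" if "i < m" "j < m" for i j
      using inj that by (auto dest: inj_onD)
    have T: "{w 0, w 1, k} \<subseteq> W" "card {w 0, w 1, k} = 3"
      using \<kappa> m w_inj[of 0 1] w_inj[of 0 \<kappa>] w_inj[of 1 \<kappa>] unfolding W(1) by auto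
    have v_eq: "v = sqfree_mon {w 0, w 1, k}"
      using k(2) unfolding v by (auto simp: sqfree_mon_def fun_eq_iff)
    have G_eq: "G = W - {w 0, w 1, k}" using k by auto
    obtain S where S: "S \<subseteq> {w 0, w 1, k}" "sqfree_mon S \<in> I"
    proof (cases "\<kappa> = 2")
      case True
      then show ?thesis
        using that[of "{w 0, w 2}"] nonadjacent_in_I[of 0 2] m \<kappa>(2) by (simp add: cyclically_adjacent_def)
    next
      case False
      then show ?thesis
        using that[of "{w 1, w \<kappa>}"] nonadjacent_in_I[of 1 \<kappa>] \<kappa> by (auto simp: cyclically_adjacent_def)
    qed
    have "v \<in> I"
      using sqfree_mon_in_ideal_mono[OF ideal _ S(1,2)] T(1) W(2) unfolding v_eq by blast
    moreover have "card G = m - 3" using T W(1) inj unfolding G_eq by (simp add: card_Diff_subset card_image)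
    moreover have "mdeg n v = 3"
      using T(1) W(2) mdeg_sqfree_mon[of "{w 0, w 1, k}" n] T(2) unfolding v_eq by (metis subset_trans)
    ultimately have "y \<in> kbasis n I (m - 3) m"
      unfolding y kbasis_def using G_eq W(2) m by auto
    then show False using y_notin by contradiction
  qed
qed

lemma kbasis_pair_complement:
  assumes F: "(sqfree_mon (W - F), F) \<in> kbasis n I (m - 2) m" "F \<subseteq> W"
    and W: "W = w ` {..<m}" and inj: "inj_on w {..<m}" and m: "2 \<le> m"
  obtains \<alpha> \<beta> where "\<alpha> < m" "\<beta> < m" "\<alpha> \<noteq> \<beta>" "sqfree_mon {w \<alpha>, w \<beta>} \<in> I" "F = W - w ` {\<alpha>, \<beta>}"
proof -
  have "card W = m" unfolding W using inj by (simp add: card_image)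
  moreover have "card F = m - 2" using F(1) unfolding kbasis_def by simp
  ultimately have "card (W - F) = 2"
    using F(2) m W by (simp add: card_Diff_subset finite_subset)
  then obtain p q where pq: "W - F = {p, q}" "p \<noteq> q" unfolding card_2_iff by blast
  then obtain \<alpha> \<beta> where "\<alpha> < m" "\<beta> < m" "p = w \<alpha>" "q = w \<beta>" unfolding W by blast
  moreover have "sqfree_mon (W - F) \<in> I" using F(1) unfolding kbasis_def by simp
  moreover have "F = W - (W - F)" using F(2) by blast
  ultimately show thesis using that pq by auto
qed

definition compl_adj :: "nat \<Rightarrow> monomial set \<Rightarrow> nat \<Rightarrow> nat \<Rightarrow> bool" where
  "compl_adj n I p q \<longleftrightarrow> p \<noteq> q \<and> p \<in> {1..n} \<and> q \<in> {1..n} \<and> sqfree_mon {p, q} \<notin> I"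

lemma induced_cycle_compl_adj_edges:
  assumes "induced_cycle (compl_adj n I) w m"
  shows "w ` {..<m} \<subseteq> {1..n}"
    and "\<And>i j. i < m \<Longrightarrow> j < m \<Longrightarrow> i \<noteq> j \<Longrightarrow> sqfree_mon {w i, w j} \<in> I \<longleftrightarrow> \<not> cyclically_adjacent m i j"
proof -
  have m: "4 \<le> m" and inj: "inj_on w {..<m}"
    and adj: "\<And>i j. i < m \<Longrightarrow> j < m \<Longrightarrow> compl_adj n I (w i) (w j) \<longleftrightarrow> cyclically_adjacent m i j"
    using assms unfolding induced_cycle_def by auto
  have range: "w i \<in> {1..n}" if "i < m" for i
  proof (cases "Suc i < m")
    case True
    then have "compl_adj n I (w i) (w (Suc i))" using adj[OF that True] by (simp add: cyclically_adjacent_def)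
    then show ?thesis unfolding compl_adj_def by simp
  next
    case False
    then have "compl_adj n I (w i) (w 0)" using adj[OF that, of 0] m that by (simp add: cyclically_adjacent_def)
    then show ?thesis unfolding compl_adj_def by simp
  qed
  then show "w ` {..<m} \<subseteq> {1..n}" by blast
  fix i j assume ij: "i < m" "j < m" "i \<noteq> j"
  then have "w i \<noteq> w j" using inj by (auto dest: inj_onD)
  then show "sqfree_mon {w i, w j} \<in> I \<longleftrightarrow> \<not> cyclically_adjacent m i j"
    using adj[OF ij(1,2)] range[OF ij(1)] range[OF ij(2)] unfolding compl_adj_def by blast
qed

lemma kdiff_pairing_single:
  fixes \<phi> :: "nat set \<Rightarrow> 'k::field"
  assumes W: "W \<subseteq> {1..n}" and F\<^sub>0: "F\<^sub>0 \<subseteq> W"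
  shows "(\<Sum>G\<in>Pow W. \<phi> G *
      kdiff n (\<lambda>y. if y = (sqfree_mon (W - F\<^sub>0), F\<^sub>0) then 1 else 0) (sqfree_mon (W - G), G)) = kcodiff \<phi> F\<^sub>0"
proof -
  have "(sqfree_mon (W - F), F) = (sqfree_mon (W - F\<^sub>0), F\<^sub>0) \<longleftrightarrow> F = F\<^sub>0" for F by auto
  then have "(\<Sum>F\<in>Pow W. (if (sqfree_mon (W - F), F) = (sqfree_mon (W - F\<^sub>0), F\<^sub>0) then 1 else 0) * kcodiff \<phi> F) =
      (\<Sum>F\<in>Pow W. if F = F\<^sub>0 then kcodiff \<phi> F else 0)"
    by (intro sum.cong) auto
  also have "\<dots> = kcodiff \<phi> F\<^sub>0" using W F\<^sub>0 by (simp add: sum.delta finite_subset)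
  finally show ?thesis unfolding kdiff_pairing[OF W] .
qed

lemma kdiff_pairing_linear_chain:
  fixes \<phi> :: "nat set \<Rightarrow> 'k::field"
  assumes b: "supported_on b (kbasis n I (m - 2) m)"
    and W: "W = w ` {..<m}" "W \<subseteq> {1..n}" and inj: "inj_on w {..<m}" and m: "2 \<le> m"
    and \<phi>: "\<And>\<alpha> \<beta>. \<alpha> < m \<Longrightarrow> \<beta> < m \<Longrightarrow> \<alpha> \<noteq> \<beta> \<Longrightarrow> sqfree_mon {w \<alpha>, w \<beta>} \<in> I \<Longrightarrow>
      kcodiff \<phi> (W - w ` {\<alpha>, \<beta>}) = 0"
  shows "(\<Sum>G\<in>Pow W. \<phi> G * kdiff n b (sqfree_mon (W - G), G)) = 0"
  unfolding kdiff_pairing[OF W(2)]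
proof (rule sum.neutral, intro ballI)
  fix F assume "F \<in> Pow W"
  show "b (sqfree_mon (W - F), F) * kcodiff \<phi> F = 0"
  proof (cases "b (sqfree_mon (W - F), F) = 0")
    case False
    then have "(sqfree_mon (W - F), F) \<in> kbasis n I (m - 2) m"
      using b unfolding supported_on_def by blast
    moreover have "F \<subseteq> W" using \<open>F \<in> Pow W\<close> by blast
    ultimately obtain \<alpha> \<beta> where "\<alpha> < m" "\<beta> < m" "\<alpha> \<noteq> \<beta>" "sqfree_mon {w \<alpha>, w \<beta>} \<in> I"
      "F = W - w ` {\<alpha>, \<beta>}"
      using W(1) inj m by (rule kbasis_pair_complement)
    then show ?thesis using \<phi> by simp
  qed simp
qed

lemma linear_resolution_no_induced_cycle:
  fixes I :: "monomial set"
  assumes ideal: "is_monomial_ideal n I" and lin: "has_linear_resolution TYPE('k::field) 2 n I"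
  shows "\<not> induced_cycle (compl_adj n I) w m"
proof
  assume cycle: "induced_cycle (compl_adj n I) w m"
  then have m: "4 \<le> m" and inj: "inj_on w {..<m}" unfolding induced_cycle_def by auto
  define W where "W = w ` {..<m}"
  have W_vars: "W \<subseteq> {1..n}" unfolding W_def by (rule induced_cycle_compl_adj_edges(1)[OF cycle])
  note edges = induced_cycle_compl_adj_edges(2)[OF cycle]
  have W_edge: "W - (W - {w 0, w 1}) = {w 0, w 1}" using m unfolding W_def by auto
  define c where "c = kdiff n (\<lambda>y. if y = (sqfree_mon {w 0, w 1}, W - {w 0, w 1}) then 1 else 0 :: 'k)"
  have "supported_on c (kbasis n I (m - 3) m)"
    unfolding c_def using edges by (intro kdiff_cycle_chain_supported[OF ideal m inj W_def W_vars]) auto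
  moreover have "kdiff n c = (\<lambda>_. 0)" unfolding c_def by (rule kdiff_kdiff)
  moreover have "m \<noteq> (m - 3) + 2" "m - 3 + 1 = m - 2" using m by auto
  ultimately obtain b :: "monomial \<times> nat set \<Rightarrow> 'k"
    where b: "supported_on b (kbasis n I (m - 2) m)" "kdiff n b = c"
    using lin unfolding has_linear_resolution_def by metis
  obtain \<phi> :: "nat set \<Rightarrow> 'k" where \<phi>_edge: "kcodiff \<phi> (W - w ` {0, 1}) \<noteq> 0"
    and \<phi>_nonedge: "\<And>\<alpha> \<beta>. \<alpha> < m \<Longrightarrow> \<beta> < m \<Longrightarrow> \<alpha> \<noteq> \<beta> \<Longrightarrow> \<not> cyclically_adjacent m \<alpha> \<beta> \<Longrightarrow>
      kcodiff \<phi> (W - w ` {\<alpha>, \<beta>}) = 0"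
    using cochain_detecting_cycle_edge[OF inj W_def m] by blast
  have "(\<Sum>G\<in>Pow W. \<phi> G * c (sqfree_mon (W - G), G)) = kcodiff \<phi> (W - {w 0, w 1})"
    using kdiff_pairing_single[OF W_vars, of "W - {w 0, w 1}" \<phi>] unfolding W_edge c_def by simp
  moreover have "(\<Sum>G\<in>Pow W. \<phi> G * c (sqfree_mon (W - G), G)) = 0"
    unfolding b(2)[symmetric]
  proof (rule kdiff_pairing_linear_chain[OF b(1) W_def W_vars inj])
    show "2 \<le> m" using m by simp
    fix \<alpha> \<beta> assume "\<alpha> < m" "\<beta> < m" "\<alpha> \<noteq> \<beta>" "sqfree_mon {w \<alpha>, w \<beta>} \<in> I"
    then show "kcodiff \<phi> (W - w ` {\<alpha>, \<beta>}) = 0" using \<phi>_nonedge edges by blast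
  qed
  ultimately show False using \<phi>_edge by simp
qed

lemma linear_resolution_chordal_complement:
  assumes "is_monomial_ideal n I" "has_linear_resolution TYPE('k::field) 2 n I"
  shows "chordal_graph (compl_adj n I)"
proof
  show "\<not> induced_cycle (compl_adj n I) w m" for w m
    using linear_resolution_no_induced_cycle[OF assms] .
qed (auto simp: compl_adj_def insert_commute)

section \<open>Weak polymatroidality along a perfect elimination order\<close>

lemma sqfree_mon_exchange_witness:
  assumes "v = sqfree_mon {c, e}" "t \<notin> {c, e}" "c \<noteq> e" "t < e" "e \<le> n" "sqfree_mon {t, c} \<in> J"
  shows "\<exists>j. t < j \<and> j \<le> n \<and> 1 \<le> v j \<and> (v(t := v t + 1))(j := v j - 1) \<in> J"
proof -
  have "(v(t := v t + 1))(e := v e - 1) = sqfree_mon {t, c}"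
    using assms(1-3) unfolding sqfree_mon_def by (auto simp: fun_eq_iff)
  then show ?thesis using assms by (intro exI[of _ e]) (auto simp: sqfree_mon_def)
qed

lemma weakly_polymatroidal_if_exchange:
  assumes gens: "\<forall>u\<in>mingens J. \<exists>a b. a \<in> {1..n} \<and> b \<in> {1..n} \<and> a < b \<and> u = sqfree_mon {a, b}"
    and exchange: "\<And>a c d. a \<in> {1..n} \<Longrightarrow> c \<in> {1..n} \<Longrightarrow> d \<in> {1..n} \<Longrightarrow> a < c \<Longrightarrow> a < d \<Longrightarrow> c \<noteq> d \<Longrightarrow>
        sqfree_mon {c, d} \<in> J \<Longrightarrow> sqfree_mon {a, c} \<in> J \<or> sqfree_mon {a, d} \<in> J"
  shows "weakly_polymatroidal n J"
  unfolding weakly_polymatroidal_def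
proof (intro ballI impI)
  fix u v t assume u: "u \<in> mingens J" and v: "v \<in> mingens J" and t: "t \<in> {1..n}"
    and h: "(\<forall>l\<in>{1..n}. l < t \<longrightarrow> u l = v l) \<and> v t < u t"
  obtain a b where ab: "a \<in> {1..n}" "b \<in> {1..n}" "a < b" "u = sqfree_mon {a, b}" using gens u by blast
  obtain c d where cd: "c \<in> {1..n}" "d \<in> {1..n}" "c < d" "v = sqfree_mon {c, d}" using gens v by blast
  have uJ: "sqfree_mon {b, a} \<in> J" and vJ: "sqfree_mon {c, d} \<in> J"
    using u v ab(4) cd(4) unfolding mingens_def by (auto simp: insert_commute)
  have agree: "\<And>l. l \<in> {1..n} \<Longrightarrow> l < t \<Longrightarrow> u l = v l" using h by blast
  have tab: "t \<in> {a, b}" and tcd: "t \<notin> {c, d}"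
    using h ab(4) cd(4) unfolding sqfree_mon_def by (auto split: if_splits)
  show "\<exists>j. t < j \<and> j \<le> n \<and> 1 \<le> v j \<and> (v(t := v t + 1))(j := v j - 1) \<in> J"
  proof (cases "t = a")
    case True
    have "\<not> c < a" using agree[OF cd(1)] True ab(3) unfolding ab(4) cd(4) sqfree_mon_def by auto
    then have "a < c" "a < d" using tcd True cd(3) by auto
    then consider "sqfree_mon {a, c} \<in> J" | "sqfree_mon {a, d} \<in> J"
      using exchange[OF ab(1) cd(1,2) _ _ _ vJ] cd(3) by auto
    then show ?thesis
    proof cases
      case 1
      then show ?thesis using sqfree_mon_exchange_witness[of v c d t] cd tcd True \<open>a < d\<close> by auto
    next
      case 2
      then show ?thesis
        using sqfree_mon_exchange_witness[of v d c t] cd tcd True \<open>a < c\<close> by (auto simp: insert_commute)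
    qed
  next
    case False
    then have "t = b" using tab by simp
    then have "v a = 1" using agree[OF ab(1)] ab(3,4) unfolding sqfree_mon_def by auto
    then have "a \<in> {c, d}" using cd(4) by (simp add: sqfree_mon_def split: if_splits)
    then obtain e where cd_ae: "{c, d} = {a, e}" and e: "e \<noteq> a" "e \<in> {1..n}"
    proof (cases "a = c")
      case True
      then show ?thesis using that[of d] cd by auto
    next
      case False
      then show ?thesis using that[of c] cd \<open>a \<in> {c, d}\<close> by (auto simp: insert_commute)
    qed
    have "e \<noteq> b" using tcd \<open>t = b\<close> cd_ae by auto
    moreover have "\<not> e < b"
      using agree[OF e(2)] \<open>t = b\<close> e(1) \<open>e \<noteq> b\<close> unfolding ab(4) cd(4) cd_ae sqfree_mon_def by auto
    ultimately show ?thesis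
      using sqfree_mon_exchange_witness[of v a e b] cd(4) cd_ae e ab(3) \<open>t = b\<close> tcd uJ by auto
  qed
qed

lemma squarefree_deg2_monomial_is_edge:
  assumes "u \<in> monomials n" "\<forall>i. u i \<le> 1" "mdeg n u = 2"
  obtains S where "S \<subseteq> {1..n}" "card S = 2" "u = sqfree_mon S"
proof
  define S where "S = {i\<in>{1..n}. u i = 1}"
  show S: "S \<subseteq> {1..n}" unfolding S_def by auto
  show u: "u = sqfree_mon S"
  proof
    fix i
    have "u i = 0 \<or> u i = 1" using assms(2) le_Suc_eq by auto
    then show "u i = sqfree_mon S i"
      using assms(1) unfolding monomials_def S_def sqfree_mon_def by (cases "i \<in> {1..n}") auto
  qed
  show "card S = 2" using assms(3) mdeg_sqfree_mon[OF S] u by simp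
qed

lemma card_2_ordered:
  assumes "card S = 2"
  obtains a b :: "'a::linorder" where "a < b" "S = {a, b}"
proof -
  obtain a b where "S = {a, b}" "a \<noteq> b" using assms unfolding card_2_iff by blast
  then show thesis using that[of a b] that[of b a] by (cases "a < b") (auto simp: insert_commute)
qed

lemma mingens_image_order_iso:
  assumes "bij h" and mono: "\<And>u v. h u \<le> h v \<longleftrightarrow> u \<le> v"
  shows "mingens (h ` I) = h ` mingens I"
proof -
  have "inj h" using assms(1) by (rule bij_is_inj)
  then show ?thesis unfolding mingens_def using mono by (auto simp: inj_eq)
qed

lemma mingens_renumber:
  assumes "\<sigma> permutes S"
  shows "mingens (renumber \<sigma> I) = renumber \<sigma> (mingens I)"
  unfolding renumber_def
proof (rule mingens_image_order_iso)
  have "surj \<sigma>" using permutes_surj[OF assms] .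
  show "(u \<circ> \<sigma> \<le> v \<circ> \<sigma>) \<longleftrightarrow> u \<le> v" for u v :: monomial
    using \<open>surj \<sigma>\<close> unfolding le_fun_def by (metis comp_apply surj_def)
  show "bij (\<lambda>u :: monomial. u \<circ> \<sigma>)"
    by (rule o_bij[where g = "\<lambda>u. u \<circ> inv \<sigma>"]) (auto simp: fun_eq_iff permutes_inverses[OF assms])
qed

lemma sqfree_mon_comp: "sqfree_mon S \<circ> \<sigma> = sqfree_mon (\<sigma> -` S)"
  unfolding sqfree_mon_def by auto

lemma sqfree_mon_in_renumber_iff:
  assumes "\<sigma> permutes A"
  shows "sqfree_mon T \<in> renumber \<sigma> I \<longleftrightarrow> sqfree_mon (\<sigma> ` T) \<in> I"
proof -
  have "\<sigma> -` \<sigma> ` T = T" using permutes_inj[OF assms] by (auto simp: inj_vimage_image_eq)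
  then have T: "sqfree_mon T = sqfree_mon (\<sigma> ` T) \<circ> \<sigma>" by (simp add: sqfree_mon_comp)
  have cancel: "u = v" if "u \<circ> \<sigma> = v \<circ> \<sigma>" for u v :: monomial
  proof
    fix i
    have "u (\<sigma> (inv \<sigma> i)) = v (\<sigma> (inv \<sigma> i))" using fun_cong[OF that, of "inv \<sigma> i"] by simp
    then show "u i = v i" by (simp add: permutes_inverses(1)[OF assms])
  qed
  show ?thesis
  proof
    assume "sqfree_mon T \<in> renumber \<sigma> I"
    then obtain u where "u \<in> I" "sqfree_mon (\<sigma> ` T) \<circ> \<sigma> = u \<circ> \<sigma>" unfolding renumber_def T by blast
    then show "sqfree_mon (\<sigma> ` T) \<in> I" using cancel by metis
  qed (unfold renumber_def T, blast)
qed

lemma renumber_mingens_edge: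
  assumes ideal: "is_monomial_ideal n I" and deg2: "squarefree_gen_deg2 n I"
    and perm: "\<sigma> permutes {1..n}" and u: "u \<in> mingens (renumber \<sigma> I)"
  shows "\<exists>a b. a \<in> {1..n} \<and> b \<in> {1..n} \<and> a < b \<and> u = sqfree_mon {a, b}"
proof -
  obtain y where y: "y \<in> mingens I" "u = y \<circ> \<sigma>"
    using u unfolding mingens_renumber[OF perm] unfolding renumber_def by blast
  then have "y \<in> monomials n" using ideal unfolding is_monomial_ideal_def mingens_def by blast
  then obtain S where S: "S \<subseteq> {1..n}" "card S = 2" "y = sqfree_mon S"
    using deg2 y(1) unfolding squarefree_gen_deg2_def by (metis squarefree_deg2_monomial_is_edge)
  have inv_perm: "inv \<sigma> permutes {1..n}" using perm by (rule permutes_inv)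
  have "\<sigma> -` S = inv \<sigma> ` S" using permutes_bij[OF perm] by (rule bij_vimage_eq_inv_image)
  moreover have "inv \<sigma> ` S \<subseteq> {1..n}" using S(1) permutes_in_image[OF inv_perm] by blast
  moreover have "card (inv \<sigma> ` S) = 2"
    using S(2) card_image[OF inj_on_subset[OF permutes_inj[OF inv_perm] subset_UNIV]] by simp
  ultimately have "\<sigma> -` S \<subseteq> {1..n}" "card (\<sigma> -` S) = 2" by simp_all
  moreover have "u = sqfree_mon (\<sigma> -` S)" using y(2) S(3) by (simp add: sqfree_mon_comp)
  ultimately show ?thesis by (metis card_2_ordered insert_subset)
qed

lemma renumber_exchange_from_simplicial:
  assumes perm: "\<sigma> permutes {1..n}"
    and peo: "\<And>a. a \<in> {1..n} \<Longrightarrow> simplicial (compl_adj n I) (\<sigma> ` {a..n}) (\<sigma> a)"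
    and acd: "a \<in> {1..n}" "c \<in> {1..n}" "d \<in> {1..n}" "a < c" "a < d" "c \<noteq> d"
    and cd: "sqfree_mon {c, d} \<in> renumber \<sigma> I"
  shows "sqfree_mon {a, c} \<in> renumber \<sigma> I \<or> sqfree_mon {a, d} \<in> renumber \<sigma> I"
proof (rule ccontr)
  assume "\<not> ?thesis"
  moreover have "\<sigma> a \<noteq> \<sigma> c" "\<sigma> a \<noteq> \<sigma> d" "\<sigma> c \<noteq> \<sigma> d"
    using permutes_inj[OF perm] acd by (auto dest: injD)
  moreover have "\<sigma> x \<in> {1..n}" if "x \<in> {1..n}" for x
    using permutes_in_image[OF perm] that by blast
  ultimately have "compl_adj n I (\<sigma> a) (\<sigma> c)" "compl_adj n I (\<sigma> a) (\<sigma> d)"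
    using acd unfolding compl_adj_def sqfree_mon_in_renumber_iff[OF perm] by auto
  moreover have "\<sigma> c \<in> \<sigma> ` {a..n}" "\<sigma> d \<in> \<sigma> ` {a..n}" using acd by auto
  ultimately have "compl_adj n I (\<sigma> c) (\<sigma> d)"
    using peo[OF acd(1)] \<open>\<sigma> c \<noteq> \<sigma> d\<close> unfolding simplicial_def by blast
  then show False using cd unfolding compl_adj_def sqfree_mon_in_renumber_iff[OF perm] by simp
qed

theorem lemma5p3:
  fixes n :: nat and I :: "monomial set"
  assumes "is_monomial_ideal n I"
    and "squarefree_gen_deg2 n I"
    and "has_linear_resolution TYPE('k::field) 2 n I"
  shows "\<exists>\<sigma>. \<sigma> permutes {1..n} \<and> weakly_polymatroidal n (renumber \<sigma> I)"
proof -
  interpret chordal_graph "compl_adj n I"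
    using assms(1,3) by (rule linear_resolution_chordal_complement)
  obtain \<sigma> where perm: "\<sigma> permutes {1..n}"
    and peo: "\<And>a. a \<in> {1..n} \<Longrightarrow> simplicial (compl_adj n I) (\<sigma> ` {a..n}) (\<sigma> a)"
    using perfect_elimination_permutation[where n = n] by blast
  have "weakly_polymatroidal n (renumber \<sigma> I)"
  proof (rule weakly_polymatroidal_if_exchange)
    show "\<forall>u\<in>mingens (renumber \<sigma> I). \<exists>a b. a \<in> {1..n} \<and> b \<in> {1..n} \<and> a < b \<and> u = sqfree_mon {a, b}"
      using renumber_mingens_edge[OF assms(1,2) perm] by blast
  qed (rule renumber_exchange_from_simplicial[OF perm peo])
  then show ?thesis using perm by blast
qed

end
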